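(* Let $\xi_1,\xi_2,\dots$ be i.i.d. standard Gaussian random variables. There are constants $c_3,c_4>0$ such that for all integers $N\ge1$ and all $L\ge2N$, $$c_3N\log(L/N)\le-\log\mathbb{E}\,e^{-L\max_{i=1,\dots,N}|\xi_i|}\le c_4N\log(L/N).$$ *)

theory Defs
  imports "HOL-Probability.Probability"
begin

end

theory Submission
  imports Defs
begin

text \<open>
  Let \<open>Y = max |\<xi>_i|\<close> and \<open>x = L/N \<ge> 2\<close>. Since \<open>L Y \<ge> x (|\<xi>_1| + ... + |\<xi>_N|)\<close>,
  independence gives \<open>E exp(-L Y) \<le> (E exp(-x |\<xi>|))^N \<le> x^(-N)\<close>; the last step holds because
  the Gaussian density is at most \<open>1/sqrt(2 pi) \<le> 1/2\<close> and \<open>exp(-x |s|)\<close> has integral \<open>2/x\<close>.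
  Conversely, on the event that every \<open>|\<xi>_i| \<le> t = 1/x\<close> we have \<open>exp(-L Y) \<ge> exp(-N)\<close>, and
  this event has probability at least \<open>(t/2)^N\<close> since the density is at least \<open>1/4\<close> on
  \<open>[-1/2, 1/2]\<close>. Taking logarithms yields \<open>c3 = 1\<close> and \<open>c4 = 4\<close>, as \<open>1 + ln 2 \<le> 3 ln 2\<close>.
\<close>

lemma std_normal_density_le: "std_normal_density s \<le> 1 / sqrt (2 * pi)"
  unfolding std_normal_density_def by (simp add: divide_simps)

lemma std_normal_density_ge_quarter:
  assumes "\<bar>s\<bar> \<le> 1/2"
  shows "1/4 \<le> std_normal_density s"
proof -
  have "s\<^sup>2 \<le> 1/4"
    using power_mono[OF assms abs_ge_zero, of 2] by (simp add: power_divide)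
  then have "exp (- 1/8) \<le> exp (- s\<^sup>2 / 2)" by simp
  moreover have "7/8 \<le> exp (- 1/8 :: real)"
    using exp_ge_add_one_self[of "-1/8::real"] by simp
  ultimately have exp_ge: "7/8 \<le> exp (- s\<^sup>2 / 2)" by linarith
  have "2 * pi \<le> (7/2::real)\<^sup>2" using pi_less_4 by (simp add: power2_eq_square)
  then have "sqrt (2 * pi) \<le> 7/2" using real_sqrt_le_mono by fastforce
  then have "2/7 \<le> 1 / sqrt (2 * pi)" by (simp add: divide_simps)
  then have "(2/7) * (7/8) \<le> 1 / sqrt (2 * pi) * exp (- s\<^sup>2 / 2)"
    by (rule mult_mono[OF _ exp_ge]) auto
  then show ?thesis unfolding std_normal_density_def by simp
qed

lemma nn_integral_exponential_density:
  assumes "(0::real) < x"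
  shows "(\<integral>\<^sup>+s. ennreal (exponential_density x s) \<partial>lborel) = 1"
proof -
  interpret prob_space "density lborel (exponential_density x)"
    using prob_space_exponential_density[OF assms] .
  show ?thesis using emeasure_space_1 by (simp add: emeasure_density)
qed

lemma nn_integral_exp_neg_abs_le:
  assumes x: "(0::real) < x"
  shows "(\<integral>\<^sup>+s. ennreal (exp (- x * \<bar>s\<bar>)) \<partial>lborel) \<le> ennreal (2 / x)"
proof -
  have reflected: "(\<integral>\<^sup>+s. ennreal (exponential_density x (- s)) \<partial>lborel) = 1"
    using nn_integral_real_affine[of "\<lambda>s. ennreal (exponential_density x s)" "-1" 0]
      nn_integral_exponential_density[OF x] by simp
  have "(\<integral>\<^sup>+s. ennreal (exp (- x * \<bar>s\<bar>)) \<partial>lborel)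
      \<le> (\<integral>\<^sup>+s. ennreal (1 / x) * (ennreal (exponential_density x s)
                                 + ennreal (exponential_density x (- s))) \<partial>lborel)"
  proof (rule nn_integral_mono)
    fix s
    have "exp (- x * \<bar>s\<bar>) \<le> 1 / x * (exponential_density x s + exponential_density x (- s))"
      using x by (cases "s < 0") (auto simp: exponential_density_def field_simps)
    then show "ennreal (exp (- x * \<bar>s\<bar>))
        \<le> ennreal (1 / x) * (ennreal (exponential_density x s) + ennreal (exponential_density x (- s)))"
      using x by (simp add: ennreal_mult'[symmetric] ennreal_plus[symmetric]
          exponential_density_nonneg ennreal_leI del: ennreal_plus)
  qed
  also have "\<dots> = ennreal (1 / x) * 2"
    using nn_integral_exponential_density[OF x] reflected
    by (simp add: nn_integral_cmult nn_integral_add one_add_one)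
  also have "\<dots> = ennreal (2 / x)"
    using x by (subst ennreal_numeral[symmetric], subst ennreal_mult[symmetric]) auto
  finally show ?thesis .
qed

context prob_space
begin

lemma expectation_exp_neg_abs_std_normal_le:
  assumes D: "distributed M lborel X std_normal_density" and x: "(0::real) < x"
  shows "expectation (\<lambda>\<omega>. exp (- x * \<bar>X \<omega>\<bar>)) \<le> 1 / x"
proof -
  have [measurable]: "X \<in> borel_measurable M" using distributed_measurable[OF D] by simp
  have "(\<integral>\<^sup>+\<omega>. ennreal (exp (- x * \<bar>X \<omega>\<bar>)) \<partial>M)
      = (\<integral>\<^sup>+s. ennreal (std_normal_density s) * ennreal (exp (- x * \<bar>s\<bar>)) \<partial>lborel)"
    by (rule distributed_nn_integral[OF D, symmetric]) simp
  also have "\<dots> \<le> (\<integral>\<^sup>+s. ennreal (1 / sqrt (2 * pi)) * ennreal (exp (- x * \<bar>s\<bar>)) \<partial>lborel)"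
    by (intro nn_integral_mono mult_right_mono ennreal_leI std_normal_density_le) simp
  also have "\<dots> \<le> ennreal (1 / sqrt (2 * pi)) * ennreal (2 / x)"
    using nn_integral_exp_neg_abs_le[OF x] by (simp add: nn_integral_cmult mult_left_mono)
  also have "\<dots> \<le> ennreal (1 / x)"
  proof -
    have "2 \<le> sqrt (2 * pi)" using pi_gt3 by (simp add: real_le_rsqrt)
    then have "1 / sqrt (2 * pi) * (2 / x) \<le> 1 / x" using x by (simp add: field_simps)
    then show ?thesis using x by (simp add: ennreal_mult'[symmetric] ennreal_leI)
  qed
  finally have "(\<integral>\<^sup>+\<omega>. ennreal (exp (- x * \<bar>X \<omega>\<bar>)) \<partial>M) \<le> ennreal (1 / x)" .
  then show ?thesis
    using x by (subst integral_eq_nn_integral) (auto intro: enn2real_leI)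
qed

lemma expectation_indicator_abs_std_normal_le_ge:
  assumes D: "distributed M lborel X std_normal_density" and t: "(0::real) < t" "t \<le> 1/2"
  shows "t / 2 \<le> expectation (\<lambda>\<omega>. if \<bar>X \<omega>\<bar> \<le> t then 1 else 0 :: real)"
proof -
  have [measurable]: "X \<in> borel_measurable M" using distributed_measurable[OF D] by simp
  have "ennreal (t / 2) = (\<integral>\<^sup>+s. ennreal (1/4) * indicator {-t..t} s \<partial>lborel)"
    using t by (simp add: nn_integral_cmult ennreal_mult[symmetric])
  also have "\<dots> \<le> (\<integral>\<^sup>+s. ennreal (std_normal_density s) * ennreal (if \<bar>s\<bar> \<le> t then 1 else 0) \<partial>lborel)"
  proof (rule nn_integral_mono)
    fix s
    have "\<bar>s\<bar> \<le> t \<Longrightarrow> 1/4 \<le> std_normal_density s"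
      using t by (intro std_normal_density_ge_quarter) auto
    then show "ennreal (1/4) * indicator {-t..t} s
        \<le> ennreal (std_normal_density s) * ennreal (if \<bar>s\<bar> \<le> t then 1 else 0)"
      by (auto simp: indicator_def abs_le_iff intro: ennreal_leI)
  qed
  also have "\<dots> = (\<integral>\<^sup>+\<omega>. ennreal (if \<bar>X \<omega>\<bar> \<le> t then 1 else 0) \<partial>M)"
    by (rule distributed_nn_integral[OF D]) simp
  also have "\<dots> = ennreal (expectation (\<lambda>\<omega>. if \<bar>X \<omega>\<bar> \<le> t then 1 else 0 :: real))"
    by (subst nn_integral_eq_integral)
      (auto intro!: integrable_const_bound[where B=1])
  finally show ?thesis using t by (simp add: ennreal_le_iff)
qed

lemma expectation_exp_neg_Max_abs_le:
  fixes \<xi> :: "'i \<Rightarrow> 'a \<Rightarrow> real"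
  assumes fin: "finite I" and ne: "I \<noteq> {}"
    and indep: "indep_vars (\<lambda>_. borel) \<xi> I"
    and D: "\<And>i. i \<in> I \<Longrightarrow> distributed M lborel (\<xi> i) std_normal_density"
    and x: "0 < (x::real)"
  shows "expectation (\<lambda>\<omega>. exp (- (x * card I) * (MAX i\<in>I. \<bar>\<xi> i \<omega>\<bar>))) \<le> (1 / x) ^ card I"
proof -
  have [measurable]: "\<xi> i \<in> borel_measurable M" if "i \<in> I" for i
    using distributed_measurable[OF D[OF that]] by simp
  have Max_nonneg: "0 \<le> (MAX i\<in>I. \<bar>\<xi> i \<omega>\<bar>)" for \<omega>
    using fin ne by (auto simp: Max_ge_iff)
  let ?f = "\<lambda>i \<omega>. exp (- x * \<bar>\<xi> i \<omega>\<bar>)"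
  have int: "integrable M (?f i)" if "i \<in> I" for i
    by (rule integrable_const_bound[where B=1]) (use x that in auto)
  have indep_f: "indep_vars (\<lambda>_. borel) ?f I"
    by (rule indep_vars_compose2[OF indep]) auto
  have pointwise: "exp (- (x * card I) * (MAX i\<in>I. \<bar>\<xi> i \<omega>\<bar>)) \<le> (\<Prod>i\<in>I. ?f i \<omega>)" for \<omega>
  proof -
    have "(\<Sum>i\<in>I. x * \<bar>\<xi> i \<omega>\<bar>) \<le> (\<Sum>i\<in>I. x * (MAX j\<in>I. \<bar>\<xi> j \<omega>\<bar>))"
      using fin x by (intro sum_mono mult_left_mono) auto
    then have "(\<Sum>i\<in>I. x * \<bar>\<xi> i \<omega>\<bar>) \<le> x * card I * (MAX i\<in>I. \<bar>\<xi> i \<omega>\<bar>)"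
      by (simp add: algebra_simps)
    then have "exp (- (x * card I) * (MAX i\<in>I. \<bar>\<xi> i \<omega>\<bar>)) \<le> exp (\<Sum>i\<in>I. - x * \<bar>\<xi> i \<omega>\<bar>)"
      by (simp add: sum_negf)
    also have "\<dots> = (\<Prod>i\<in>I. ?f i \<omega>)" by (rule exp_sum[OF fin])
    finally show ?thesis .
  qed
  have "expectation (\<lambda>\<omega>. exp (- (x * card I) * (MAX i\<in>I. \<bar>\<xi> i \<omega>\<bar>)))
      \<le> expectation (\<lambda>\<omega>. \<Prod>i\<in>I. ?f i \<omega>)"
    using fin x Max_nonneg by (intro integral_mono pointwise indep_vars_integrable[OF fin indep_f int]
        integrable_const_bound[where B=1]) auto
  also have "\<dots> = (\<Prod>i\<in>I. expectation (?f i))"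
    by (rule indep_vars_lebesgue_integral[OF fin indep_f int])
  also have "\<dots> \<le> (\<Prod>i\<in>I. 1 / x)"
    using expectation_exp_neg_abs_std_normal_le[OF D x] by (intro prod_mono) auto
  finally show ?thesis by simp
qed

lemma expectation_exp_neg_Max_abs_ge:
  fixes \<xi> :: "'i \<Rightarrow> 'a \<Rightarrow> real"
  assumes fin: "finite I" and ne: "I \<noteq> {}"
    and indep: "indep_vars (\<lambda>_. borel) \<xi> I"
    and D: "\<And>i. i \<in> I \<Longrightarrow> distributed M lborel (\<xi> i) std_normal_density"
    and L: "0 \<le> L" and t: "0 < t" "t \<le> 1/2"
  shows "exp (- L * t) * (t / 2) ^ card I
      \<le> expectation (\<lambda>\<omega>. exp (- L * (MAX i\<in>I. \<bar>\<xi> i \<omega>\<bar>)))"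
proof -
  have [measurable]: "\<xi> i \<in> borel_measurable M" if "i \<in> I" for i
    using distributed_measurable[OF D[OF that]] by simp
  have Max_nonneg: "0 \<le> (MAX i\<in>I. \<bar>\<xi> i \<omega>\<bar>)" for \<omega>
    using fin ne by (auto simp: Max_ge_iff)
  let ?g = "\<lambda>i \<omega>. if \<bar>\<xi> i \<omega>\<bar> \<le> t then 1 else 0 :: real"
  have int: "integrable M (?g i)" if "i \<in> I" for i
    by (rule integrable_const_bound[where B=1]) (use that in auto)
  have indep_g: "indep_vars (\<lambda>_. borel) ?g I"
    by (rule indep_vars_compose2[OF indep]) auto
  have pointwise: "exp (- L * t) * (\<Prod>i\<in>I. ?g i \<omega>) \<le> exp (- L * (MAX i\<in>I. \<bar>\<xi> i \<omega>\<bar>))" for \<omega>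
  proof (cases "\<forall>i\<in>I. \<bar>\<xi> i \<omega>\<bar> \<le> t")
    case True
    then have "(MAX i\<in>I. \<bar>\<xi> i \<omega>\<bar>) \<le> t" using fin ne by simp
    then show ?thesis using True L by (simp add: mult_left_mono)
  next
    case False
    then show ?thesis using fin by (simp add: prod_zero)
  qed
  have "exp (- L * t) * (t / 2) ^ card I = exp (- L * t) * (\<Prod>i\<in>I. t / 2)" by simp
  also have "\<dots> \<le> exp (- L * t) * (\<Prod>i\<in>I. expectation (?g i))"
    using expectation_indicator_abs_std_normal_le_ge[OF D t] t
    by (intro mult_left_mono prod_mono) auto
  also have "\<dots> = expectation (\<lambda>\<omega>. exp (- L * t) * (\<Prod>i\<in>I. ?g i \<omega>))"
    by (simp add: indep_vars_lebesgue_integral[OF fin indep_g int])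
  also have "\<dots> \<le> expectation (\<lambda>\<omega>. exp (- L * (MAX i\<in>I. \<bar>\<xi> i \<omega>\<bar>)))"
    using fin L Max_nonneg by (intro integral_mono pointwise integrable_mult_right
        indep_vars_integrable[OF fin indep_g int] integrable_const_bound[where B=1]) auto
  finally show ?thesis .
qed

lemma neg_ln_expectation_exp_neg_Max_abs_bounds:
  fixes \<xi> :: "'i \<Rightarrow> 'a \<Rightarrow> real"
  assumes fin: "finite I" and ne: "I \<noteq> {}"
    and indep: "indep_vars (\<lambda>_. borel) \<xi> I"
    and D: "\<And>i. i \<in> I \<Longrightarrow> distributed M lborel (\<xi> i) std_normal_density"
    and L: "2 * real (card I) \<le> L"
  defines "E \<equiv> expectation (\<lambda>\<omega>. exp (- L * (MAX i\<in>I. \<bar>\<xi> i \<omega>\<bar>)))"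
  shows "card I * ln (L / card I) \<le> - ln E \<and> - ln E \<le> 4 * card I * ln (L / card I)"
proof -
  define N where "N = real (card I)"
  define x where "x = L / N"
  have N: "0 < N" using fin ne by (simp add: N_def card_gt_0_iff)
  have x: "2 \<le> x" using L N by (simp add: x_def N_def field_simps)
  have L_eq: "L = x * N" using N by (simp add: x_def)
  have "E \<le> (1 / x) ^ card I"
    using expectation_exp_neg_Max_abs_le[OF fin ne indep D, of x] x
    by (simp add: E_def L_eq N_def)
  moreover have "exp (- N) * (1 / (x * 2)) ^ card I \<le> E"
    using expectation_exp_neg_Max_abs_ge[OF fin ne indep D, of L "1 / x"] x N
    by (simp add: E_def L_eq)
  moreover have "0 < exp (- N) * (1 / (x * 2)) ^ card I" using x by simp
  ultimately have "ln (exp (- N) * (1 / (x * 2)) ^ card I) \<le> ln E \<and> ln E \<le> ln ((1 / x) ^ card I)"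
    by simp
  then have "N * ln x \<le> - ln E \<and> - ln E \<le> N * (1 + ln 2 + ln x)"
    using x by (simp add: ln_mult ln_realpow ln_div N_def algebra_simps)
  moreover have "N * (1 + ln 2 + ln x) \<le> N * (4 * ln x)"
  proof -
    have "ln 2 \<le> ln x" using x by simp
    then show ?thesis using ln2_ge_two_thirds N by (intro mult_left_mono) auto
  qed
  ultimately show ?thesis by (simp add: x_def N_def)
qed

end

theorem lemma8:
  fixes M :: "'a measure" and \<xi> :: "nat \<Rightarrow> 'a \<Rightarrow> real"
  assumes "prob_space M"
    and "prob_space.indep_vars M (\<lambda>_. borel) \<xi> {1..}"
    and "\<And>i. i \<ge> 1 \<Longrightarrow> distributed M lborel (\<xi> i) std_normal_density"
  shows "\<exists>c3 c4 :: real. c3 > 0 \<and> c4 > 0 \<and>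
    (\<forall>(N::nat) (L::real). N \<ge> 1 \<longrightarrow> L \<ge> 2 * real N \<longrightarrow>
      c3 * real N * ln (L / real N)
        \<le> - ln (prob_space.expectation M (\<lambda>\<omega>. exp (- L * (MAX i\<in>{1..N}. \<bar>\<xi> i \<omega>\<bar>))))
      \<and> - ln (prob_space.expectation M (\<lambda>\<omega>. exp (- L * (MAX i\<in>{1..N}. \<bar>\<xi> i \<omega>\<bar>))))
        \<le> c4 * real N * ln (L / real N))"
proof -
  interpret prob_space M by fact
  have "real N * ln (L / real N)
        \<le> - ln (expectation (\<lambda>\<omega>. exp (- L * (MAX i\<in>{1..N}. \<bar>\<xi> i \<omega>\<bar>))))
      \<and> - ln (expectation (\<lambda>\<omega>. exp (- L * (MAX i\<in>{1..N}. \<bar>\<xi> i \<omega>\<bar>))))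
        \<le> 4 * real N * ln (L / real N)"
    if "N \<ge> 1" "L \<ge> 2 * real N" for N :: nat and L :: real
    using that assms(3) neg_ln_expectation_exp_neg_Max_abs_bounds[of "{1..N}" \<xi> L]
      indep_vars_subset[OF assms(2), of "{1..N}"]
    by auto
  then show ?thesis by (intro exI[of _ 1] exI[of _ 4]) auto
qed

end
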